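(* Let $\mathbf n=(n_1,\dots,n_k)$ with $n_i\ge0$ integers and $\sum n_i=n$. For every $m\ge0$, as rational functions of $q^{-2}$ and indeterminates $\mu_1,\dots,\mu_k$, $$\vartheta_m(\mathbf n,q^{-2},\mu)=\sum_{j=1}^kC_j(\mathbf n,q^{-2},\mu)\mu_j^m,$$ where $$C_j(\mathbf n,q^{-2},\mu)=\hat n_j+\hat n_j\sum_{\ell=1}^{k-1}(1-q^{-2})^\ell\sum_{\substack{1\le i_1<\dots<i_\ell\le k\\ i_1,\dots,i_\ell\neq j}}\frac{\hat n_{i_1}\mu_{i_1}}{\mu_j-\mu_{i_1}}\cdots\frac{\hat n_{i_\ell}\mu_{i_\ell}}{\mu_j-\mu_{i_\ell}}.$$
   Context: $\hat m=\frac{1-q^{-2m}}{1-q^{-2}}$ for $m\in\mathbb Z$. For $m\ge1$, $\vartheta_m(\mathbf n,q^{-2},\mu)=\sum_{\ell=1}^k(1-q^{-2})^{\ell-1}\sum_{\mathbf d}\sum_{1\le i_1<\dots<i_\ell\le k}\hat n_{i_1}\cdots\hat n_{i_\ell}\mu_{i_1}^{d_1}\cdots\mu_{i_\ell}^{d_\ell}$, where $\mathbf d=(d_1,\dots,d_\ell)$ runs over $\ell$-tuples of positive integers with $d_1+\dots+d_\ell=m$; and $\vartheta_0(\mathbf n,q^{-2},\mu)=\hat n$. *)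

theory Defs
  imports Main
begin

text \<open>Here t stands for q^(-2); hat t m = (1 - t^m)/(1 - t).\<close>
definition qhat :: "'a::field \<Rightarrow> nat \<Rightarrow> 'a" where
  "qhat t m = (1 - t ^ m) / (1 - t)"

text \<open>theta_m(n, t, mu), with n = (n 1, ..., n k). Tuples d = (d_1,...,d_l) of positive
  integers summing to m are lists; indices i_1 < ... < i_l in {1..k} are strictly
  sorted lists.\<close>
definition theta :: "nat \<Rightarrow> (nat \<Rightarrow> nat) \<Rightarrow> 'a::field \<Rightarrow> (nat \<Rightarrow> 'a) \<Rightarrow> nat \<Rightarrow> 'a" where
  "theta k n t \<mu> m =
    (if m = 0 then qhat t (\<Sum>i=1..k. n i)
     else (\<Sum>l=1..k. (1 - t) ^ (l - 1) *
       (\<Sum>d\<in>{d. length d = l \<and> (\<forall>x\<in>set d. 0 < x) \<and> sum_list d = m}.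
         (\<Sum>is\<in>{is. length is = l \<and> sorted_wrt (<) is \<and> set is \<subseteq> {1..k}}.
            (\<Prod>r<l. qhat t (n (is ! r)) * \<mu> (is ! r) ^ (d ! r))))))"

definition Ccoef :: "nat \<Rightarrow> (nat \<Rightarrow> nat) \<Rightarrow> 'a::field \<Rightarrow> (nat \<Rightarrow> 'a) \<Rightarrow> nat \<Rightarrow> 'a" where
  "Ccoef k n t \<mu> j =
    qhat t (n j) + qhat t (n j) *
      (\<Sum>l=1..k-1. (1 - t) ^ l *
        (\<Sum>S\<in>{S. S \<subseteq> {1..k} - {j} \<and> card S = l}.
           (\<Prod>i\<in>S. qhat t (n i) * \<mu> i / (\<mu> j - \<mu> i))))"

end

theory Submission
  imports Defs
begin

(* Put c i = (1 - t) * qhat t (n i) = 1 - t ^ n i.  Then (1 - t) * theta_m sums, over the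
   compositions of m whose parts carry strictly increasing labels from {1..k}, the products of
   c i * mu i ^ d over the parts d with label i: it is the coefficient of x ^ m in
   prod_i (1 + c i * mu i * x / (1 - mu i * x)).  Splitting off the smallest label gives a
   convolution recurrence in m, which the partial fraction expansion of this product
   (prod_partial_fractions) solves: for m > 0 the coefficient is
   sum_j pf_coeff c mu {1..k} j * mu j ^ m, and pf_coeff c mu {1..k} j = (1 - t) * C_j.
   For m = 0 the same expansion gives sum_j pf_coeff c mu {1..k} j = 1 - t ^ n. *)

lemma partial_fraction_step:
  fixes x y z b c :: "'a::field"
  assumes "x \<noteq> y" "x \<noteq> z" "y \<noteq> z"
  shows "b / (x - y) * (1 + c / (y - z)) + c / (x - z) * (b / (z - y))
       = (1 + c / (x - z)) * (b / (x - y))"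
proof -
  have "b / p * (1 + c / q) - c / (p + q) * (b / q) = (1 + c / (p + q)) * (b / p)"
    if "p \<noteq> 0" "q \<noteq> 0" "p + q \<noteq> 0" for p q
    using that by (simp add: divide_simps) (simp add: algebra_simps)
  from this[of "x - y" "y - z"] show ?thesis
    using assms by (simp add: minus_diff_eq[symmetric, of y z] del: minus_diff_eq)
qed

lemma prod_partial_fractions:
  fixes \<mu> b :: "'b \<Rightarrow> 'a::field"
  assumes "finite A" "inj_on \<mu> A" "x \<notin> \<mu> ` A"
  shows "(\<Prod>i\<in>A. 1 + b i / (x - \<mu> i)) =
    1 + (\<Sum>j\<in>A. b j / (x - \<mu> j) * (\<Prod>i\<in>A - {j}. 1 + b i / (\<mu> j - \<mu> i)))"
  using assms
proof (induction A arbitrary: x rule: finite_induct)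
  case empty
  then show ?case by simp
next
  case (insert z A)
  define P where "P j = (\<Prod>i\<in>A - {j}. 1 + b i / (\<mu> j - \<mu> i))" for j
  have inj: "inj_on \<mu> A" and z: "\<mu> z \<notin> \<mu> ` A" and xz: "x \<noteq> \<mu> z" and xA: "x \<notin> \<mu> ` A"
    using insert.prems insert.hyps(2) by auto
  have Pz: "(\<Prod>i\<in>A. 1 + b i / (\<mu> z - \<mu> i)) = 1 + (\<Sum>j\<in>A. b j / (\<mu> z - \<mu> j) * P j)"
    using insert.IH[OF inj z] unfolding P_def .
  have Pj: "(\<Prod>i\<in>insert z A - {j}. 1 + b i / (\<mu> j - \<mu> i)) = (1 + b z / (\<mu> j - \<mu> z)) * P j"
    if "j \<in> A" for j
    using that insert.hyps unfolding P_def by (auto simp: insert_Diff_if)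
  have step: "b j / (x - \<mu> j) * (1 + b z / (\<mu> j - \<mu> z)) + b z / (x - \<mu> z) * (b j / (\<mu> z - \<mu> j))
      = (1 + b z / (x - \<mu> z)) * (b j / (x - \<mu> j))" if "j \<in> A" for j
    using that xA xz z by (intro partial_fraction_step) (force simp: image_iff)+
  have "1 + (\<Sum>j\<in>insert z A. b j / (x - \<mu> j) * (\<Prod>i\<in>insert z A - {j}. 1 + b i / (\<mu> j - \<mu> i)))
      = 1 + b z / (x - \<mu> z) * (1 + (\<Sum>j\<in>A. b j / (\<mu> z - \<mu> j) * P j))
        + (\<Sum>j\<in>A. b j / (x - \<mu> j) * ((1 + b z / (\<mu> j - \<mu> z)) * P j))"
    using insert.hyps by (simp add: Pz Pj)
  also have "\<dots> = 1 + b z / (x - \<mu> z) + (\<Sum>j\<in>A. (b j / (x - \<mu> j) * (1 + b z / (\<mu> j - \<mu> z))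
        + b z / (x - \<mu> z) * (b j / (\<mu> z - \<mu> j))) * P j)"
    by (simp add: algebra_simps sum_distrib_left sum.distrib)
  also have "\<dots> = 1 + b z / (x - \<mu> z) + (\<Sum>j\<in>A. (1 + b z / (x - \<mu> z)) * (b j / (x - \<mu> j)) * P j)"
    using step by simp
  also have "\<dots> = (1 + b z / (x - \<mu> z)) * (1 + (\<Sum>j\<in>A. b j / (x - \<mu> j) * P j))"
    by (simp add: distrib_left sum_distrib_left mult.assoc)
  also have "\<dots> = (\<Prod>i\<in>insert z A. 1 + b i / (x - \<mu> i))"
    using insert.IH[OF inj xA] insert.hyps unfolding P_def by simp
  finally show ?case by (rule sym)
qed

definition pf_coeff :: "('b \<Rightarrow> 'a::field) \<Rightarrow> ('b \<Rightarrow> 'a) \<Rightarrow> 'b set \<Rightarrow> 'b \<Rightarrow> 'a" where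
  "pf_coeff c \<mu> A j = c j * (\<Prod>i\<in>A - {j}. 1 + c i * \<mu> i / (\<mu> j - \<mu> i))"

lemma pf_coeff_insert:
  assumes "finite A" "a \<notin> A" "j \<in> A"
  shows "pf_coeff c \<mu> (insert a A) j = (1 + c a * \<mu> a / (\<mu> j - \<mu> a)) * pf_coeff c \<mu> A j"
  using assms by (simp add: pf_coeff_def insert_Diff_if)

lemma pf_coeff_insert_self:
  assumes "finite A" "a \<notin> A" "inj_on \<mu> (insert a A)"
  shows "pf_coeff c \<mu> (insert a A) a = c a + c a * (\<Sum>j\<in>A. \<mu> j / (\<mu> a - \<mu> j) * pf_coeff c \<mu> A j)"
proof -
  have "pf_coeff c \<mu> (insert a A) a = c a * (\<Prod>i\<in>A. 1 + c i * \<mu> i / (\<mu> a - \<mu> i))"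
    using assms(2) by (simp add: pf_coeff_def)
  also have "\<dots> = c a * (1 + (\<Sum>j\<in>A. c j * \<mu> j / (\<mu> a - \<mu> j) * (\<Prod>i\<in>A - {j}. 1 + c i * \<mu> i / (\<mu> j - \<mu> i))))"
    using assms by (subst prod_partial_fractions) auto
  finally show ?thesis by (simp add: pf_coeff_def algebra_simps sum_distrib_left)
qed

(* The quotient (mu a ^ m * mu j - mu a * mu j ^ m) / (mu a - mu j) is the convolution
   sum of mu a ^ e * mu j ^ (m - e) over e = 1..m-1 when m > 0, and -1 when m = 0. *)
lemma sum_pf_coeff_power_insert:
  fixes c \<mu> :: "'b \<Rightarrow> 'a::field"
  assumes "finite A" "a \<notin> A" "inj_on \<mu> (insert a A)"
  shows "(\<Sum>j\<in>insert a A. pf_coeff c \<mu> (insert a A) j * \<mu> j ^ m)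
    = c a * \<mu> a ^ m + (\<Sum>j\<in>A. pf_coeff c \<mu> A j *
        (\<mu> j ^ m + c a * (\<mu> a ^ m * \<mu> j - \<mu> a * \<mu> j ^ m) / (\<mu> a - \<mu> j)))"
proof -
  have coeff: "\<mu> a ^ m * (c a * \<mu> j / (\<mu> a - \<mu> j)) + (1 + c a * \<mu> a / (\<mu> j - \<mu> a)) * \<mu> j ^ m
      = \<mu> j ^ m + c a * (\<mu> a ^ m * \<mu> j - \<mu> a * \<mu> j ^ m) / (\<mu> a - \<mu> j)"
    if "j \<in> A" for j
  proof -
    have "X * (c a * y / D) + (1 + c a * x / - D) * Y = Y + c a * (X * y - x * Y) / D"
      if "D \<noteq> 0" for D X Y x y
      using that by (simp add: field_simps)
    moreover have "\<mu> a - \<mu> j \<noteq> 0" using that assms by (auto simp: inj_on_def)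
    ultimately show ?thesis by (metis minus_diff_eq)
  qed
  have "(\<Sum>j\<in>insert a A. pf_coeff c \<mu> (insert a A) j * \<mu> j ^ m)
      = (c a + c a * (\<Sum>j\<in>A. \<mu> j / (\<mu> a - \<mu> j) * pf_coeff c \<mu> A j)) * \<mu> a ^ m
        + (\<Sum>j\<in>A. (1 + c a * \<mu> a / (\<mu> j - \<mu> a)) * pf_coeff c \<mu> A j * \<mu> j ^ m)"
    using assms by (simp add: pf_coeff_insert pf_coeff_insert_self)
  also have "\<dots> = c a * \<mu> a ^ m + (\<Sum>j\<in>A. pf_coeff c \<mu> A j *
      (\<mu> a ^ m * (c a * \<mu> j / (\<mu> a - \<mu> j)) + (1 + c a * \<mu> a / (\<mu> j - \<mu> a)) * \<mu> j ^ m))"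
    by (simp add: algebra_simps sum_distrib_left sum.distrib)
  finally show ?thesis using coeff by simp
qed

lemma sum_pf_coeff:
  fixes c \<mu> :: "'b \<Rightarrow> 'a::field"
  assumes "finite A" "inj_on \<mu> A"
  shows "(\<Sum>j\<in>A. pf_coeff c \<mu> A j) = 1 - (\<Prod>i\<in>A. 1 - c i)"
  using assms
proof (induction A rule: finite_induct)
  case empty
  then show ?case by simp
next
  case (insert a A)
  then have IH: "(\<Sum>j\<in>A. pf_coeff c \<mu> A j) = 1 - (\<Prod>i\<in>A. 1 - c i)" by simp
  have "(\<Sum>j\<in>insert a A. pf_coeff c \<mu> (insert a A) j)
      = c a * \<mu> a ^ 0 + (\<Sum>j\<in>A. pf_coeff c \<mu> A j *
        (\<mu> j ^ 0 + c a * (\<mu> a ^ 0 * \<mu> j - \<mu> a * \<mu> j ^ 0) / (\<mu> a - \<mu> j)))"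
    using sum_pf_coeff_power_insert[OF insert.hyps insert.prems, of c 0] by simp
  also have "\<dots> = c a + (\<Sum>j\<in>A. pf_coeff c \<mu> A j * (1 - c a))"
  proof (rule arg_cong2[where f = "(+)"], simp, rule sum.cong[OF refl])
    fix j assume "j \<in> A"
    then have "\<mu> a - \<mu> j \<noteq> 0" using insert by (auto simp: image_iff)
    then show "pf_coeff c \<mu> A j * (\<mu> j ^ 0 + c a * (\<mu> a ^ 0 * \<mu> j - \<mu> a * \<mu> j ^ 0) / (\<mu> a - \<mu> j))
        = pf_coeff c \<mu> A j * (1 - c a)"
      by (simp add: field_simps)
  qed
  also have "\<dots> = c a + (\<Sum>j\<in>A. pf_coeff c \<mu> A j) * (1 - c a)"
    by (simp add: sum_distrib_right)
  also have "\<dots> = 1 - (1 - c a) * (\<Prod>i\<in>A. 1 - c i)"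
    unfolding IH by (simp add: algebra_simps)
  finally show ?case using insert.hyps by simp
qed

lemma diff_mult_sum_powers:
  fixes x y :: "'a::comm_ring_1"
  shows "(x - y) * (\<Sum>e=1..p. x ^ e * y ^ (Suc p - e)) = x ^ Suc p * y - x * y ^ Suc p"
proof -
  have "y ^ (p - i) = y * y ^ (p - Suc i)" if "i < p" for i
    using that by (metis Suc_diff_Suc power_Suc)
  then have "(\<Sum>e=1..p. x ^ e * y ^ (Suc p - e)) = x * y * (\<Sum>i<p. y ^ (p - Suc i) * x ^ i)"
    unfolding sum_distrib_left by (simp add: sum.atLeast1_atMost_eq algebra_simps)
  then have "(x - y) * (\<Sum>e=1..p. x ^ e * y ^ (Suc p - e)) = x * y * (x ^ p - y ^ p)"
    by (simp add: power_diff_sumr2[of x p y] ac_simps)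
  then show ?thesis by (simp add: algebra_simps)
qed

definition compositions :: "nat \<Rightarrow> nat \<Rightarrow> nat list set" where
  "compositions l m = {d. length d = l \<and> (\<forall>x\<in>set d. 0 < x) \<and> sum_list d = m}"

definition strict_lists :: "nat \<Rightarrow> 'b::linorder set \<Rightarrow> 'b list set" where
  "strict_lists l A = {is. length is = l \<and> sorted_wrt (<) is \<and> set is \<subseteq> A}"

definition labelled_comp_sum ::
    "('b::linorder \<Rightarrow> nat \<Rightarrow> 'a::comm_semiring_1) \<Rightarrow> 'b set \<Rightarrow> nat \<Rightarrow> nat \<Rightarrow> 'a" where
  "labelled_comp_sum w A l m =
    (\<Sum>is\<in>strict_lists l A. \<Sum>d\<in>compositions l m. \<Prod>r<l. w (is ! r) (d ! r))"

definition labelled_comp_total ::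
    "('b::linorder \<Rightarrow> nat \<Rightarrow> 'a::comm_semiring_1) \<Rightarrow> 'b set \<Rightarrow> nat \<Rightarrow> 'a" where
  "labelled_comp_total w A m = (\<Sum>l\<le>card A. labelled_comp_sum w A l m)"

lemma finite_compositions: "finite (compositions l m)"
proof -
  have "compositions l m \<subseteq> {d. set d \<subseteq> {..m} \<and> length d = l}"
    unfolding compositions_def using member_le_sum_list by fastforce
  then show ?thesis using finite_lists_length_eq[of "{..m}" l] finite_subset by blast
qed

lemma finite_strict_lists: "finite A \<Longrightarrow> finite (strict_lists l A)"
  by (rule finite_subset[OF _ finite_lists_length_eq[of A l]]) (auto simp: strict_lists_def)

lemma compositions_0: "compositions 0 m = (if m = 0 then {[]} else {})"
  by (auto simp: compositions_def)

lemma compositions_Suc: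
  "compositions (Suc l) m = (\<lambda>(e, d). e # d) ` (SIGMA e:{1..m}. compositions l (m - e))"
  by (fastforce simp: compositions_def length_Suc_conv)

lemma strict_lists_0: "strict_lists 0 A = {[]}"
  by (auto simp: strict_lists_def)

lemma strict_lists_Suc_insert_min:
  assumes "\<forall>x\<in>A. a < x"
  shows "strict_lists (Suc l) (insert a A) = strict_lists (Suc l) A \<union> Cons a ` strict_lists l A"
  using assms by (fastforce simp: strict_lists_def length_Suc_conv)

lemma strict_lists_eq_empty:
  assumes "finite A" "card A < l"
  shows "strict_lists l A = {}"
proof -
  have "l \<le> card A" if "is \<in> strict_lists l A" for "is"
  proof -
    have "card (set is) = l"
      using that strict_sorted_iff distinct_card unfolding strict_lists_def by blast
    then show ?thesis using that card_mono[OF assms(1)] unfolding strict_lists_def by blast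
  qed
  then show ?thesis using assms(2) by fastforce
qed

lemma labelled_comp_sum_0: "labelled_comp_sum w A 0 m = (if m = 0 then 1 else 0)"
  by (simp add: labelled_comp_sum_def strict_lists_0 compositions_0)

lemma labelled_comp_sum_Suc_0: "labelled_comp_sum w A (Suc l) 0 = 0"
  by (simp add: labelled_comp_sum_def compositions_Suc)

lemma labelled_comp_sum_eq_0: "finite A \<Longrightarrow> card A < l \<Longrightarrow> labelled_comp_sum w A l m = 0"
  by (simp add: labelled_comp_sum_def strict_lists_eq_empty)

lemma labelled_comp_sum_Suc_insert_min:
  assumes "finite A" "\<forall>x\<in>A. a < x"
  shows "labelled_comp_sum w (insert a A) (Suc l) m
    = labelled_comp_sum w A (Suc l) m + (\<Sum>e=1..m. w a e * labelled_comp_sum w A l (m - e))"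
proof -
  define F where "F is = (\<Sum>d\<in>compositions (Suc l) m. \<Prod>r<Suc l. w (is ! r) (d ! r))" for "is"
  have "strict_lists (Suc l) A \<inter> Cons a ` strict_lists l A = {}"
    using assms(2) by (auto simp: strict_lists_def)
  then have "labelled_comp_sum w (insert a A) (Suc l) m
      = sum F (strict_lists (Suc l) A) + sum F (Cons a ` strict_lists l A)"
    unfolding labelled_comp_sum_def F_def strict_lists_Suc_insert_min[OF assms(2)]
    using assms(1) by (simp add: sum.union_disjoint finite_strict_lists)
  also have "sum F (Cons a ` strict_lists l A) = (\<Sum>is\<in>strict_lists l A. F (a # is))"
    by (simp add: sum.reindex)
  also have "\<dots> = (\<Sum>is\<in>strict_lists l A. \<Sum>e=1..m.
      w a e * (\<Sum>d\<in>compositions l (m - e). \<Prod>r<l. w (is ! r) (d ! r)))"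
  proof (rule sum.cong[OF refl])
    fix "is"
    have "F (a # is) = (\<Sum>(e, d)\<in>(SIGMA e:{1..m}. compositions l (m - e)).
        \<Prod>r<Suc l. w ((a # is) ! r) ((e # d) ! r))"
      unfolding F_def compositions_Suc by (subst sum.reindex) (auto simp: inj_on_def case_prod_unfold)
    also have "\<dots> = (\<Sum>e=1..m. \<Sum>d\<in>compositions l (m - e). \<Prod>r<Suc l. w ((a # is) ! r) ((e # d) ! r))"
      by (rule sum.Sigma[symmetric]) (auto simp: finite_compositions)
    also have "\<dots> = (\<Sum>e=1..m. w a e * (\<Sum>d\<in>compositions l (m - e). \<Prod>r<l. w (is ! r) (d ! r)))"
      by (simp add: prod.lessThan_Suc_shift sum_distrib_left del: prod.lessThan_Suc)
    finally show "F (a # is) = \<dots>" .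
  qed
  also have "\<dots> = (\<Sum>e=1..m. w a e * labelled_comp_sum w A l (m - e))"
    unfolding labelled_comp_sum_def by (subst sum.swap) (simp add: sum_distrib_left)
  finally show ?thesis unfolding labelled_comp_sum_def F_def .
qed

lemma labelled_comp_total_0: "labelled_comp_total w A 0 = 1"
  by (simp add: labelled_comp_total_def sum.atMost_shift labelled_comp_sum_0 labelled_comp_sum_Suc_0)

lemma labelled_comp_total_insert_min:
  assumes "finite A" "\<forall>x\<in>A. a < x"
  shows "labelled_comp_total w (insert a A) m
    = labelled_comp_total w A m + (\<Sum>e=1..m. w a e * labelled_comp_total w A (m - e))"
proof -
  let ?S = "labelled_comp_sum w A"
  have card: "card (insert a A) = Suc (card A)" using assms by auto
  have "labelled_comp_total w (insert a A) m
      = ?S 0 m + (\<Sum>l\<le>card A. ?S (Suc l) m) + (\<Sum>l\<le>card A. \<Sum>e=1..m. w a e * ?S l (m - e))"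
    unfolding labelled_comp_total_def card sum.atMost_Suc_shift
    by (simp add: labelled_comp_sum_0 labelled_comp_sum_Suc_insert_min[OF assms] sum.distrib)
  also have "?S 0 m + (\<Sum>l\<le>card A. ?S (Suc l) m) = (\<Sum>l\<le>Suc (card A). ?S l m)"
    by (rule sum.atMost_Suc_shift[symmetric])
  also have "\<dots> = labelled_comp_total w A m"
    using assms(1) by (simp add: labelled_comp_total_def labelled_comp_sum_eq_0)
  also have "(\<Sum>l\<le>card A. \<Sum>e=1..m. w a e * ?S l (m - e))
      = (\<Sum>e=1..m. w a e * labelled_comp_total w A (m - e))"
    unfolding labelled_comp_total_def sum_distrib_left by (rule sum.swap)
  finally show ?thesis .
qed

lemma labelled_comp_total_eq_pf_coeff:
  fixes c \<mu> :: "'b::linorder \<Rightarrow> 'a::field"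
  assumes "finite A" "inj_on \<mu> A" "0 < m"
  shows "labelled_comp_total (\<lambda>i e. c i * \<mu> i ^ e) A m = (\<Sum>j\<in>A. pf_coeff c \<mu> A j * \<mu> j ^ m)"
  using assms
proof (induction A arbitrary: m rule: finite_linorder_min_induct)
  case empty
  then show ?case by (simp add: labelled_comp_total_def labelled_comp_sum_0)
next
  case (insert a A)
  let ?T = "labelled_comp_total (\<lambda>i e. c i * \<mu> i ^ e) A"
  define R where "R x = (\<Sum>j\<in>A. pf_coeff c \<mu> A j * \<mu> j ^ x)" for x
  obtain p where m: "m = Suc p" using insert.prems by (cases m) auto
  have aA: "a \<notin> A" using insert.hyps by auto
  have IH: "?T x = R x" if "0 < x" for x
    using insert.IH insert.prems that unfolding R_def by (auto intro: inj_on_subset)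
  have geom: "(\<Sum>e=1..p. \<mu> a ^ e * \<mu> j ^ (m - e)) = (\<mu> a ^ m * \<mu> j - \<mu> a * \<mu> j ^ m) / (\<mu> a - \<mu> j)"
    if "j \<in> A" for j
  proof -
    have "\<mu> a - \<mu> j \<noteq> 0" using that aA insert.prems by (auto simp: inj_on_def)
    then show ?thesis unfolding m using diff_mult_sum_powers[of "\<mu> a" "\<mu> j" p]
      by (simp add: eq_divide_eq mult.commute)
  qed
  have "(\<Sum>e=1..m. c a * \<mu> a ^ e * ?T (m - e)) = c a * \<mu> a ^ m + (\<Sum>e=1..p. c a * \<mu> a ^ e * R (m - e))"
    unfolding m using IH by (simp add: labelled_comp_total_0)
  also have "(\<Sum>e=1..p. c a * \<mu> a ^ e * R (m - e))
      = (\<Sum>j\<in>A. pf_coeff c \<mu> A j * (c a * (\<Sum>e=1..p. \<mu> a ^ e * \<mu> j ^ (m - e))))"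
    unfolding R_def sum_distrib_left by (subst sum.swap) (simp add: ac_simps)
  also have "\<dots> = (\<Sum>j\<in>A. pf_coeff c \<mu> A j * (c a * (\<mu> a ^ m * \<mu> j - \<mu> a * \<mu> j ^ m) / (\<mu> a - \<mu> j)))"
    by (intro sum.cong refl) (simp only: geom times_divide_eq_right)
  finally have step: "(\<Sum>e=1..m. c a * \<mu> a ^ e * ?T (m - e)) = c a * \<mu> a ^ m
      + (\<Sum>j\<in>A. pf_coeff c \<mu> A j * (c a * (\<mu> a ^ m * \<mu> j - \<mu> a * \<mu> j ^ m) / (\<mu> a - \<mu> j)))" .
  have "labelled_comp_total (\<lambda>i e. c i * \<mu> i ^ e) (insert a A) m
      = R m + (\<Sum>e=1..m. c a * \<mu> a ^ e * ?T (m - e))"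
    using insert.hyps insert.prems by (simp add: labelled_comp_total_insert_min IH)
  also have "\<dots> = (\<Sum>j\<in>insert a A. pf_coeff c \<mu> (insert a A) j * \<mu> j ^ m)"
    unfolding step sum_pf_coeff_power_insert[OF insert.hyps(1) aA insert.prems(1)] R_def
    by (simp add: sum.distrib algebra_simps)
  finally show ?case .
qed

lemma one_minus_mult_qhat: "t \<noteq> 1 \<Longrightarrow> (1 - t) * qhat t m = 1 - t ^ m"
  by (simp add: qhat_def)

lemma theta_0:
  assumes "t \<noteq> 1"
  shows "(1 - t) * theta k n t \<mu> 0 = 1 - (\<Prod>i\<in>{1..k}. 1 - (1 - t) * qhat t (n i))"
  using assms by (simp add: theta_def one_minus_mult_qhat power_sum)

lemma theta_eq_labelled_comp_total:
  assumes "0 < m"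
  shows "(1 - t) * theta k n t \<mu> m
    = labelled_comp_total (\<lambda>i e. (1 - t) * qhat t (n i) * \<mu> i ^ e) {1..k} m"
proof -
  let ?w = "\<lambda>i e. (1 - t) * qhat t (n i) * \<mu> i ^ e"
  have "(1 - t) ^ l * (\<Sum>d\<in>compositions l m. \<Sum>is\<in>strict_lists l {1..k}.
      \<Prod>r<l. qhat t (n (is ! r)) * \<mu> (is ! r) ^ (d ! r)) = labelled_comp_sum ?w {1..k} l m" for l
    unfolding labelled_comp_sum_def
    by (subst sum.swap) (simp add: sum_distrib_left prod.distrib mult.assoc)
  then have "(1 - t) * theta k n t \<mu> m = (\<Sum>l=1..k. labelled_comp_sum ?w {1..k} l m)"
    using assms unfolding theta_def compositions_def[symmetric] strict_lists_def[symmetric]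
    by (simp add: sum_distrib_left mult.assoc[symmetric] power_Suc[symmetric] del: power_Suc)
  also have "\<dots> = labelled_comp_total ?w {1..k} m"
    unfolding labelled_comp_total_def atMost_atLeast0 using assms
    by (subst (2) sum.atLeast_Suc_atMost) (auto simp: labelled_comp_sum_0)
  finally show ?thesis .
qed

lemma prod_one_plus_by_card:
  fixes s :: "'a::comm_semiring_1"
  assumes "finite B"
  shows "(\<Prod>i\<in>B. 1 + s * h i) = (\<Sum>l\<le>card B. s ^ l * (\<Sum>S | S \<subseteq> B \<and> card S = l. \<Prod>i\<in>S. h i))"
proof -
  have "(\<Prod>i\<in>B. 1 + s * h i) = (\<Sum>S\<in>Pow B. \<Prod>i\<in>S. s * h i)"
    using prod_add[OF assms, of "\<lambda>i. s * h i" "\<lambda>i. 1"] by (simp add: add.commute)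
  also have "\<dots> = (\<Sum>l\<le>card B. \<Sum>S | S \<in> Pow B \<and> card S = l. \<Prod>i\<in>S. s * h i)"
    using assms by (intro sum.group[symmetric]) (auto simp: card_mono)
  also have "\<dots> = (\<Sum>l\<le>card B. s ^ l * (\<Sum>S | S \<subseteq> B \<and> card S = l. \<Prod>i\<in>S. h i))"
    by (simp add: prod.distrib sum_distrib_left)
  finally show ?thesis .
qed

lemma Ccoef_eq_pf_coeff:
  assumes "j \<in> {1..k}"
  shows "(1 - t) * Ccoef k n t \<mu> j = pf_coeff (\<lambda>i. (1 - t) * qhat t (n i)) \<mu> {1..k} j"
proof -
  define B where "B = {1..k} - {j}"
  define h where "h i = qhat t (n i) * \<mu> i / (\<mu> j - \<mu> i)" for i
  have finB: "finite B" and card: "card B = k - 1" using assms unfolding B_def by simp_all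
  have empty: "{S. S \<subseteq> B \<and> card S = 0} = {{}}"
    unfolding B_def by (auto dest: finite_subset)
  have "(\<Prod>i\<in>B. 1 + (1 - t) * qhat t (n i) * \<mu> i / (\<mu> j - \<mu> i)) = (\<Prod>i\<in>B. 1 + (1 - t) * h i)"
    by (simp add: h_def mult.assoc)
  also have "\<dots> = (\<Sum>l\<le>k - 1. (1 - t) ^ l * (\<Sum>S | S \<subseteq> B \<and> card S = l. \<Prod>i\<in>S. h i))"
    using prod_one_plus_by_card[OF finB] card by simp
  also have "\<dots> = 1 + (\<Sum>l=1..k - 1. (1 - t) ^ l * (\<Sum>S | S \<subseteq> B \<and> card S = l. \<Prod>i\<in>S. h i))"
    by (simp add: atMost_atLeast0 sum.atLeast_Suc_atMost empty)
  finally show ?thesis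
    unfolding pf_coeff_def Ccoef_def B_def[symmetric] h_def[symmetric] by (simp add: algebra_simps)
qed

theorem proposition4p3:
  fixes t :: "'a::field_char_0" and \<mu> :: "nat \<Rightarrow> 'a" and n :: "nat \<Rightarrow> nat" and k m :: nat
  assumes "t \<noteq> 1" and "inj_on \<mu> {1..k}"
  shows "theta k n t \<mu> m = (\<Sum>j=1..k. Ccoef k n t \<mu> j * \<mu> j ^ m)"
proof -
  define c where "c = (\<lambda>i. (1 - t) * qhat t (n i))"
  have "(1 - t) * theta k n t \<mu> m = (\<Sum>j=1..k. pf_coeff c \<mu> {1..k} j * \<mu> j ^ m)"
  proof (cases "m = 0")
    case True
    then show ?thesis
      using theta_0[OF assms(1)] sum_pf_coeff[OF _ assms(2), of c] by (simp add: c_def)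
  next
    case False
    then have "(1 - t) * theta k n t \<mu> m = labelled_comp_total (\<lambda>i e. c i * \<mu> i ^ e) {1..k} m"
      unfolding c_def by (simp add: theta_eq_labelled_comp_total)
    also have "\<dots> = (\<Sum>j=1..k. pf_coeff c \<mu> {1..k} j * \<mu> j ^ m)"
      using False assms(2) by (simp add: labelled_comp_total_eq_pf_coeff)
    finally show ?thesis .
  qed
  also have "\<dots> = (\<Sum>j=1..k. (1 - t) * Ccoef k n t \<mu> j * \<mu> j ^ m)"
    unfolding c_def by (intro sum.cong refl) (simp add: Ccoef_eq_pf_coeff)
  also have "\<dots> = (1 - t) * (\<Sum>j=1..k. Ccoef k n t \<mu> j * \<mu> j ^ m)"
    by (simp add: sum_distrib_left mult.assoc)
  finally show ?thesis using assms(1) by simp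
qed

end
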